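(* Let $\mathcal{Y}=\mathbb{R}$, $K\ge1$, and $\alpha\in(0,1)$ with $(1-\alpha)K$ a positive integer. Let $q_k=1/K$ for all $k\in[K]$, and fix integers $n_1,\dots,n_K\ge1$ with $n_1=\min_k n_k$. Let the score function be $s(x,y)=y$, and let $\Pi_1,\dots,\Pi_K$ be distributions on $\mathcal{X}^1\times\mathbb{R}$ whose marginals on the response $Y$ are: $\textnormal{Unif}[0,1]$ for $k=1$; $\textnormal{Unif}[-1,0]$ for $k=2,\dots,(1-\alpha)K$; and $\textnormal{Unif}[1,2]$ for $k=(1-\alpha)K+1,\dots,K$. Suppose calibration data $(X_1,Y_1),\dots,(X_n,Y_n)$, $n=\sum_k n_k$, are generated independently with, for each $k$ and each $i\in\{n_1+\dots+n_{k-1}+1,\dots,n_1+\dots+n_k\}$, $X_i^0=k$ and $(X_i^1,Y_i)\sim\Pi_k$, and an independent test point satisfies $\mathbb{P}\{X^0_{n+1}=k\}=1/K$ and $(X^1_{n+1},Y_{n+1})\mid X^0_{n+1}=k\sim\Pi_k$. Then the GWCP prediction set $\widehat{C}_n$ (defined in the context) satisfies \[\mathbb{P}\{Y_{n+1}\in\widehat{C}_n(X_{n+1})\}=1-\alpha-\frac{1}{K(\min_k n_k+1)}.\]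
   Context: Features are $x=(x^0,x^1)\in[K]\times\mathcal{X}^1$ with $x^0$ the group label. For a probability distribution $\mu$ on $\mathbb{R}\cup\{+\infty\}$ and $\tau\in(0,1]$, $\textnormal{Quantile}_{\tau}(\mu)=\inf\{t\in\mathbb{R}\cup\{+\infty\}:\mu([-\infty,t])\ge\tau\}$; $\delta_s$ is the point mass at $s$. With $s_i=s(X_i,Y_i)$ and $\widehat{P}^{(k)}_{\textnormal{score}}=\frac{1}{n_k}\sum_{i\le n:\,X_i^0=k}\delta_{s_i}$, the GWCP set is $\widehat{C}_n(x)=\{y: s(x,y)\le\widehat{q}\}$ with $\widehat{q}=\textnormal{Quantile}_{1-\alpha}\big(\sum_{k=1}^K q_k\widehat{P}^{(k)}_{\textnormal{score}}\big)$. *)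

theory Defs
  imports "HOL-Probability.Probability"
begin

text \<open>Quantile of a (sub)probability distribution on the extended reals, given through
  its function t \<mapsto> mu([-infinity,t]):
  Quantile_tau(mu) = inf { t in R \<union> {+infinity} : mu([-infinity,t]) >= tau }.\<close>
definition Quantile :: "real \<Rightarrow> (ereal \<Rightarrow> real) \<Rightarrow> ereal" where
  "Quantile \<tau> F = Inf {t :: ereal. t \<noteq> -\<infinity> \<and> F t \<ge> \<tau>}"

definition group_size :: "nat \<Rightarrow> (nat \<Rightarrow> nat) \<Rightarrow> nat \<Rightarrow> nat" where
  "group_size n x0 k = card {i \<in> {1..n}. x0 i = k}"

text \<open>The measure  sum_k q_k Phat^(k)_score  evaluated on [-infinity,t], where
  Phat^(k)_score = (1/n_k) sum_{i \<le> n, X_i^0 = k} delta_{s_i}.\<close>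
definition mixture_score_cdf ::
  "nat \<Rightarrow> (nat \<Rightarrow> real) \<Rightarrow> nat \<Rightarrow> (nat \<Rightarrow> nat) \<Rightarrow> (nat \<Rightarrow> real) \<Rightarrow> ereal \<Rightarrow> real" where
  "mixture_score_cdf K q n x0 sc t =
     (\<Sum>k\<in>{1..K}. q k * ((1 / real (group_size n x0 k)) *
        real (card {i \<in> {1..n}. x0 i = k \<and> ereal (sc i) \<le> t})))"

text \<open>GWCP threshold qhat and prediction set Chat_n(x) = {y. s(x,y) \<le> qhat}.
  Calibration data: features X i = (X_i^0, X_i^1), responses Yd i, for i = 1..n.\<close>
definition gwcp_qhat ::
  "real \<Rightarrow> nat \<Rightarrow> (nat \<Rightarrow> real) \<Rightarrow> nat \<Rightarrow> (nat \<times> 'x \<Rightarrow> real \<Rightarrow> real)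
    \<Rightarrow> (nat \<Rightarrow> nat \<times> 'x) \<Rightarrow> (nat \<Rightarrow> real) \<Rightarrow> ereal" where
  "gwcp_qhat \<alpha> K q n s X Yd =
     Quantile (1 - \<alpha>) (mixture_score_cdf K q n (\<lambda>i. fst (X i)) (\<lambda>i. s (X i) (Yd i)))"

definition gwcp_set ::
  "real \<Rightarrow> nat \<Rightarrow> (nat \<Rightarrow> real) \<Rightarrow> nat \<Rightarrow> (nat \<times> 'x \<Rightarrow> real \<Rightarrow> real)
    \<Rightarrow> (nat \<Rightarrow> nat \<times> 'x) \<Rightarrow> (nat \<Rightarrow> real) \<Rightarrow> nat \<times> 'x \<Rightarrow> real set" where
  "gwcp_set \<alpha> K q n s X Yd x = {y. ereal (s x y) \<le> gwcp_qhat \<alpha> K q n s X Yd}"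

end

theory Submission
  imports Defs
begin

text \<open>With the score s(x, y) = y, almost surely the scores of groups 2..m are at most 0,
  those of groups m+1..K are at least 1, and those of group 1 lie in [0, 1]. The weighted
  empirical distribution function therefore stays below 1 - \<alpha> = m/K exactly until it reaches
  the largest group-1 score, so the GWCP threshold is the maximum of the n_1 group-1 scores.
  The test score is independent of this maximum, whose survival function is 1 - t^n_1 on [0, 1];
  averaging over the test group gives (1 - 1/(n_1 + 1))/K + (m - 1)/K + 0.\<close>

section \<open>Quantiles of a distribution function\<close>

lemma ereal_le_Quantile_iff:
  "ereal y \<le> Quantile \<tau> F \<longleftrightarrow> (\<forall>t<y. F (ereal t) < \<tau>)"
proof
  assume le: "ereal y \<le> Quantile \<tau> F"
  show "\<forall>t<y. F (ereal t) < \<tau>"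
  proof (intro allI impI)
    fix t assume "t < y"
    show "F (ereal t) < \<tau>"
    proof (rule ccontr)
      assume "\<not> F (ereal t) < \<tau>"
      then have "Quantile \<tau> F \<le> ereal t"
        unfolding Quantile_def by (intro Inf_lower) auto
      with le have "ereal y \<le> ereal t" by (rule order_trans)
      with \<open>t < y\<close> show False by simp
    qed
  qed
next
  assume below: "\<forall>t<y. F (ereal t) < \<tau>"
  show "ereal y \<le> Quantile \<tau> F"
    unfolding Quantile_def
  proof (rule Inf_greatest, rule ccontr)
    fix x assume x: "x \<in> {t. t \<noteq> -\<infinity> \<and> \<tau> \<le> F t}" and "\<not> ereal y \<le> x"
    then obtain t where "x = ereal t" "t < y" by (cases x) auto
    with x below show False by auto
  qed
qed

lemma Quantile_eq_ereal:
  assumes "\<And>t. F (ereal t) < \<tau> \<longleftrightarrow> t < c"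
  shows "Quantile \<tau> F = ereal c"
proof -
  have le_iff: "ereal y \<le> Quantile \<tau> F \<longleftrightarrow> y \<le> c" for y
    unfolding ereal_le_Quantile_iff assms
    by (auto intro: dense_le less_imp_le order_less_le_trans)
  show ?thesis
  proof (cases "Quantile \<tau> F")
    case (real r)
    with le_iff[of c] le_iff[of r] show ?thesis by simp
  next
    case PInf
    with le_iff[of "c + 1"] show ?thesis by simp
  next
    case MInf
    with le_iff[of c] show ?thesis by simp
  qed
qed

lemma measurable_le_Quantile:
  assumes mono: "\<And>\<omega> s t. s \<le> t \<Longrightarrow> F \<omega> (ereal s) \<le> F \<omega> (ereal t)"
    and F: "\<And>t. (\<lambda>\<omega>. F \<omega> (ereal t)) \<in> borel_measurable M"
    and Z: "Z \<in> borel_measurable M"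
  shows "{\<omega> \<in> space M. ereal (Z \<omega>) \<le> Quantile \<tau> (F \<omega>)} \<in> sets M"
proof -
  have "(\<forall>t<Z \<omega>. F \<omega> (ereal t) < \<tau>) \<longleftrightarrow> (\<forall>r::rat. of_rat r < Z \<omega> \<longrightarrow> F \<omega> (ereal (of_rat r)) < \<tau>)"
    for \<omega>
  proof (intro iffI allI impI)
    fix t assume rat_below: "\<forall>r::rat. of_rat r < Z \<omega> \<longrightarrow> F \<omega> (ereal (of_rat r)) < \<tau>" and "t < Z \<omega>"
    then obtain r :: rat where "t < of_rat r" "of_rat r < Z \<omega>"
      using of_rat_dense by blast
    with rat_below mono[of t "of_rat r" \<omega>] show "F \<omega> (ereal t) < \<tau>" by force
  qed simp
  then have "{\<omega> \<in> space M. ereal (Z \<omega>) \<le> Quantile \<tau> (F \<omega>)} =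
      {\<omega> \<in> space M. \<forall>r::rat. of_rat r < Z \<omega> \<longrightarrow> F \<omega> (ereal (of_rat r)) < \<tau>}"
    by (simp add: ereal_le_Quantile_iff)
  also have "\<dots> \<in> sets M"
  proof (rule sets.sets_Collect_countable_All)
    fix r :: rat
    note [measurable] = F[of "of_rat r"] Z
    show "{\<omega> \<in> space M. of_rat r < Z \<omega> \<longrightarrow> F \<omega> (ereal (of_rat r)) < \<tau>} \<in> sets M"
      by measurable
  qed
  finally show ?thesis .
qed

section \<open>The group-weighted empirical distribution function\<close>

definition group_fraction :: "nat \<Rightarrow> (nat \<Rightarrow> nat) \<Rightarrow> (nat \<Rightarrow> real) \<Rightarrow> nat \<Rightarrow> ereal \<Rightarrow> real" where
  "group_fraction n x0 sc k t =
     real (card {i \<in> {1..n}. x0 i = k \<and> ereal (sc i) \<le> t}) / real (group_size n x0 k)"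

lemma mixture_score_cdf_eq_sum_group_fraction:
  "mixture_score_cdf K q n x0 sc t = (\<Sum>k\<in>{1..K}. q k * group_fraction n x0 sc k t)"
  by (simp add: mixture_score_cdf_def group_fraction_def)

lemma card_group_le_group_size:
  "card {i \<in> {1..n}. x0 i = k \<and> P i} \<le> group_size n x0 k"
  unfolding group_size_def by (intro card_mono) auto

lemma group_fraction_nonneg: "0 \<le> group_fraction n x0 sc k t"
  by (simp add: group_fraction_def)

lemma group_fraction_le_one: "group_fraction n x0 sc k t \<le> 1"
  using card_group_le_group_size[of n x0 k "\<lambda>i. ereal (sc i) \<le> t"]
  by (cases "group_size n x0 k = 0") (simp_all add: group_fraction_def divide_le_eq_1)

lemma group_fraction_mono:
  assumes "s \<le> t"
  shows "group_fraction n x0 sc k s \<le> group_fraction n x0 sc k t"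
  unfolding group_fraction_def using assms
  by (intro divide_right_mono of_nat_mono card_mono) (auto intro: order_trans)

lemma group_fraction_eq_one:
  assumes "group_size n x0 k \<noteq> 0" and "\<And>i. i \<in> {1..n} \<Longrightarrow> x0 i = k \<Longrightarrow> ereal (sc i) \<le> t"
  shows "group_fraction n x0 sc k t = 1"
proof -
  have "{i \<in> {1..n}. x0 i = k \<and> ereal (sc i) \<le> t} = {i \<in> {1..n}. x0 i = k}"
    using assms(2) by auto
  with assms(1) show ?thesis by (simp add: group_fraction_def group_size_def)
qed

lemma group_fraction_eq_zero:
  assumes "\<And>i. i \<in> {1..n} \<Longrightarrow> x0 i = k \<Longrightarrow> t < ereal (sc i)"
  shows "group_fraction n x0 sc k t = 0"
proof -
  have "{i \<in> {1..n}. x0 i = k \<and> ereal (sc i) \<le> t} = {}"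
    using assms by (auto simp: not_le[symmetric])
  then show ?thesis by (simp add: group_fraction_def)
qed

lemma group_fraction_less_one:
  assumes "i \<in> {1..n}" "x0 i = k" "t < ereal (sc i)"
  shows "group_fraction n x0 sc k t < 1"
proof -
  have "{j \<in> {1..n}. x0 j = k \<and> ereal (sc j) \<le> t} \<subset> {j \<in> {1..n}. x0 j = k}"
    using assms by (auto simp: not_le[symmetric])
  then have "card {j \<in> {1..n}. x0 j = k \<and> ereal (sc j) \<le> t} < group_size n x0 k"
    unfolding group_size_def by (intro psubset_card_mono) auto
  then show ?thesis by (simp add: group_fraction_def)
qed

lemma mixture_score_cdf_mono:
  assumes "\<And>k. 0 \<le> q k" and "s \<le> t"
  shows "mixture_score_cdf K q n x0 sc s \<le> mixture_score_cdf K q n x0 sc t"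
  unfolding mixture_score_cdf_eq_sum_group_fraction
  using assms by (intro sum_mono mult_left_mono group_fraction_mono)

lemma measurable_mixture_score_cdf:
  assumes x0: "\<And>i. i \<in> {1..n} \<Longrightarrow> x0 i \<in> measurable M (count_space UNIV)"
    and sc: "\<And>i. i \<in> {1..n} \<Longrightarrow> sc i \<in> borel_measurable M"
  shows "(\<lambda>\<omega>. mixture_score_cdf K q n (\<lambda>i. x0 i \<omega>) (\<lambda>i. sc i \<omega>) t) \<in> borel_measurable M"
proof -
  have card_eq: "real (card {i \<in> {1..n}. P i}) = (\<Sum>i\<in>{1..n}. if P i then 1 else 0)" for P
    by (simp add: sum.inter_filter[symmetric])
  have [measurable]: "(\<lambda>\<omega>. if x0 i \<omega> = k \<and> ereal (sc i \<omega>) \<le> t then 1 else 0 :: real) \<in> borel_measurable M"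
    "(\<lambda>\<omega>. if x0 i \<omega> = k then 1 else 0 :: real) \<in> borel_measurable M"
    if "i \<in> {1..n}" for i k
    using x0[OF that] sc[OF that] by measurable
  show ?thesis
    unfolding mixture_score_cdf_def group_size_def card_eq by measurable
qed

lemma mixture_score_cdf_less_iff_less_Max:
  fixes x0 :: "nat \<Rightarrow> nat" and sc :: "nat \<Rightarrow> real"
  assumes m: "1 \<le> m" "m \<le> K"
    and q: "\<And>k. 0 \<le> q k" "0 < q 1"
    and sizes: "\<And>k. k \<in> {1..m} \<Longrightarrow> group_size n x0 k \<noteq> 0"
    and group1: "\<And>i. i \<in> {1..n} \<Longrightarrow> x0 i = 1 \<Longrightarrow> sc i \<in> {0..1}"
    and low: "\<And>i. i \<in> {1..n} \<Longrightarrow> x0 i \<in> {2..m} \<Longrightarrow> sc i \<le> 0"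
    and high: "\<And>i. i \<in> {1..n} \<Longrightarrow> x0 i \<in> {m+1..K} \<Longrightarrow> 1 \<le> sc i"
  shows "mixture_score_cdf K q n x0 sc (ereal t) < sum q {1..m}
           \<longleftrightarrow> t < Max (sc ` {i \<in> {1..n}. x0 i = 1})"
proof -
  define G1 where "G1 = {i \<in> {1..n}. x0 i = 1}"
  define c where "c = Max (sc ` G1)"
  let ?frac = "\<lambda>k. group_fraction n x0 sc k (ereal t)"
  have "G1 \<noteq> {}"
    using sizes[of 1] m by (auto simp: group_size_def G1_def)
  then have "c \<in> sc ` G1"
    unfolding c_def by (intro Max_in) (auto simp: G1_def)
  then obtain i1 where i1: "i1 \<in> G1" "sc i1 = c"
    by auto
  have le_c: "sc i \<le> c" if "i \<in> G1" for i
    using that by (simp add: c_def G1_def)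
  have c01: "0 \<le> c" "c \<le> 1"
    using group1 i1 by (auto simp: G1_def)
  have "{1..K} = {1..m} \<union> {m+1..K}"
    using m by auto
  then have F_split: "mixture_score_cdf K q n x0 sc (ereal t) =
      (\<Sum>k\<in>{1..m}. q k * ?frac k) + (\<Sum>k\<in>{m+1..K}. q k * ?frac k)"
    unfolding mixture_score_cdf_eq_sum_group_fraction by (simp add: sum.union_disjoint)
  show ?thesis
    unfolding G1_def[symmetric] c_def[symmetric]
  proof
    assume less: "mixture_score_cdf K q n x0 sc (ereal t) < sum q {1..m}"
    show "t < c"
    proof (rule ccontr)
      assume "\<not> t < c"
      then have full: "?frac k = 1" if "k \<in> {1..m}" for k
        using that sizes le_c low c01
        by (intro group_fraction_eq_one) (force simp: G1_def)+
      have "sum q {1..m} \<le> mixture_score_cdf K q n x0 sc (ereal t)"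
        unfolding F_split using full q(1)
        by (simp add: sum_nonneg group_fraction_nonneg)
      with less show False by simp
    qed
  next
    assume "t < c"
    have "?frac k = 0" if "k \<in> {m+1..K}" for k
      using that high c01 \<open>t < c\<close> by (intro group_fraction_eq_zero) force
    then have "mixture_score_cdf K q n x0 sc (ereal t) = (\<Sum>k\<in>{1..m}. q k * ?frac k)"
      unfolding F_split by simp
    also have "\<dots> < sum q {1..m}"
    proof (rule sum_strict_mono_ex1)
      show "\<forall>k\<in>{1..m}. q k * ?frac k \<le> q k"
        using q(1) group_fraction_le_one by (simp add: mult_left_le)
      have "?frac 1 < 1"
        using i1 \<open>t < c\<close> by (intro group_fraction_less_one[of i1]) (auto simp: G1_def)
      then show "\<exists>k\<in>{1..m}. q k * ?frac k < q k"
        using q(2) m by (intro bexI[of _ 1]) simp_all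
    qed simp
    finally show "mixture_score_cdf K q n x0 sc (ereal t) < sum q {1..m}" .
  qed
qed

lemma gwcp_qhat_eq_Max:
  fixes X :: "nat \<Rightarrow> nat \<times> 'x" and Yd :: "nat \<Rightarrow> real"
  assumes m: "1 \<le> m" "m \<le> K" "real m = (1 - \<alpha>) * real K"
    and sizes: "\<And>k. k \<in> {1..m} \<Longrightarrow> group_size n (\<lambda>i. fst (X i)) k \<noteq> 0"
    and group1: "\<And>i. i \<in> {1..n} \<Longrightarrow> fst (X i) = 1 \<Longrightarrow> Yd i \<in> {0..1}"
    and low: "\<And>i. i \<in> {1..n} \<Longrightarrow> fst (X i) \<in> {2..m} \<Longrightarrow> Yd i \<le> 0"
    and high: "\<And>i. i \<in> {1..n} \<Longrightarrow> fst (X i) \<in> {m+1..K} \<Longrightarrow> 1 \<le> Yd i"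
  shows "gwcp_qhat \<alpha> K (\<lambda>_. 1 / real K) n (\<lambda>x y. y) X Yd =
           ereal (Max (Yd ` {i \<in> {1..n}. fst (X i) = 1}))"
proof -
  have threshold: "1 - \<alpha> = (\<Sum>k\<in>{1..m}. 1 / real K)"
    using m by (simp add: field_simps)
  show ?thesis
    unfolding gwcp_qhat_def threshold
    by (intro Quantile_eq_ereal mixture_score_cdf_less_iff_less_Max[OF m(1,2)])
       (use m sizes group1 low high in auto)
qed

section \<open>Uniform distributions and maxima of independent variables\<close>

lemma (in prob_space) AE_mem_of_distr_uniform:
  fixes Z :: "'a \<Rightarrow> real"
  assumes "random_variable borel Z" and "distr M borel Z = uniform_measure lborel A"
    and "A \<in> sets borel"
  shows "AE \<omega> in M. Z \<omega> \<in> A"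
proof -
  have "AE y in distr M borel Z. y \<in> A"
    unfolding assms(2) using assms(3) by (intro AE_uniform_measureI) auto
  then show ?thesis
    by (rule AE_distrD[OF assms(1)])
qed

lemma measure_uniform_01_lessThan:
  "measure (uniform_measure lborel {0..1::real}) {..<y} = max 0 (min 1 y)"
proof -
  have "{0..1} \<inter> {..<y} = (if y \<le> 0 then {} else if y \<le> 1 then {0..<y} else {0..1::real})"
    by auto
  then show ?thesis by simp
qed

lemma nn_integral_uniform_Icc_const:
  fixes a b :: real
  assumes "a < b" and "\<And>y. y \<in> {a..b} \<Longrightarrow> f y = c"
  shows "(\<integral>\<^sup>+y. f y \<partial>uniform_measure lborel {a..b}) = c"
proof -
  interpret U: prob_space "uniform_measure lborel {a..b}"
    using \<open>a < b\<close> by (intro prob_space_uniform_measure) auto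
  have "(\<integral>\<^sup>+y. f y \<partial>uniform_measure lborel {a..b}) = (\<integral>\<^sup>+y. c \<partial>uniform_measure lborel {a..b})"
    using assms(2) by (intro nn_integral_cong_AE AE_uniform_measureI) auto
  also have "\<dots> = c"
    by (simp only: nn_integral_const U.emeasure_space_1 mult_1_right)
  finally show ?thesis .
qed

lemma nn_integral_uniform_01_one_minus_power:
  assumes "\<And>y. y \<in> {0..1} \<Longrightarrow> f y = ennreal (1 - y ^ N)"
  shows "(\<integral>\<^sup>+y. f y \<partial>uniform_measure lborel {0..1::real}) = ennreal (1 - 1 / (real N + 1))"
proof -
  let ?F = "\<lambda>y::real. y - y ^ Suc N / real (Suc N)"
  have "((\<lambda>y. 1 - y ^ N) has_integral (?F 1 - ?F 0)) {0..1::real}"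
  proof (rule fundamental_theorem_of_calculus)
    fix x :: real
    have "(?F has_real_derivative (1 - x ^ N)) (at x)"
      by (auto intro!: derivative_eq_intros simp del: of_nat_Suc) (cases N; auto simp: field_simps)
    then show "(?F has_vector_derivative (1 - x ^ N)) (at x within {0..1})"
      by (simp add: has_real_derivative_iff_has_vector_derivative has_vector_derivative_at_within)
  qed simp
  then have "((\<lambda>y. 1 - y ^ N) has_integral (1 - 1 / (real N + 1))) {0..1::real}"
    by (simp add: add.commute)
  then have "(\<integral>\<^sup>+y. ennreal (indicator {0..1} y * (1 - y ^ N)) \<partial>lborel) = ennreal (1 - 1 / (real N + 1))"
    by (rule nn_integral_has_integral_lebesgue[rotated]) (auto intro: power_le_one)
  moreover have "(\<integral>\<^sup>+y. f y \<partial>uniform_measure lborel {0..1::real}) =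
      (\<integral>\<^sup>+y. ennreal (1 - y ^ N) \<partial>uniform_measure lborel {0..1::real})"
    using assms by (intro nn_integral_cong_AE AE_uniform_measureI) auto
  moreover have "(\<integral>\<^sup>+y. ennreal (1 - y ^ N) \<partial>uniform_measure lborel {0..1::real}) =
      (\<integral>\<^sup>+y. ennreal (indicator {0..1} y * (1 - y ^ N)) \<partial>lborel)"
    by (subst nn_integral_uniform_measure) (auto intro!: nn_integral_cong simp: indicator_def divide_ennreal_def)
  ultimately show ?thesis by simp
qed

lemma (in prob_space) indep_vars_Max:
  fixes X :: "'i \<Rightarrow> 'a \<Rightarrow> real"
  assumes I: "finite I" "i \<notin> I" and indep: "indep_vars (\<lambda>_. borel) X (insert i I)"
  shows "indep_var borel (X i) borel (\<lambda>\<omega>. Max ((\<lambda>j. X j \<omega>) ` I))"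
proof -
  have "indep_var
    borel ((\<lambda>f. f i) \<circ> (\<lambda>\<omega>. restrict (\<lambda>i. X i \<omega>) {i}))
    borel ((\<lambda>f. Max (f ` I)) \<circ> (\<lambda>\<omega>. restrict (\<lambda>i. X i \<omega>) I))"
    using I by (intro indep_var_compose[OF indep_var_restrict[OF indep]]) auto
  also have "((\<lambda>f. f i) \<circ> (\<lambda>\<omega>. restrict (\<lambda>i. X i \<omega>) {i})) = X i"
    by auto
  also have "((\<lambda>f. Max (f ` I)) \<circ> (\<lambda>\<omega>. restrict (\<lambda>i. X i \<omega>) I)) = (\<lambda>\<omega>. Max ((\<lambda>j. X j \<omega>) ` I))"
    by (auto intro!: arg_cong[where f = Max])
  finally show ?thesis .
qed

lemma (in prob_space) prob_Max_less:
  fixes X :: "'i \<Rightarrow> 'a \<Rightarrow> real"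
  assumes indep: "indep_vars (\<lambda>_. borel) X I" and J: "finite J" "J \<noteq> {}" "J \<subseteq> I"
  shows "prob {\<omega> \<in> space M. Max ((\<lambda>j. X j \<omega>) ` J) < y} = (\<Prod>j\<in>J. prob {\<omega> \<in> space M. X j \<omega> < y})"
proof -
  have "{\<omega> \<in> space M. Max ((\<lambda>j. X j \<omega>) ` J) < y} = (\<Inter>j\<in>J. X j -` {..<y} \<inter> space M)"
    using J by auto
  also have "prob \<dots> = (\<Prod>j\<in>J. prob (X j -` {..<y} \<inter> space M))"
    using J by (intro indep_varsD[OF indep]) auto
  finally show ?thesis
    by (simp add: vimage_def Int_def conj_commute)
qed

lemma (in prob_space) emeasure_le_indep_var:
  fixes X Z :: "'a \<Rightarrow> real"
  assumes "indep_var borel X borel Z"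
  shows "emeasure M {\<omega> \<in> space M. X \<omega> \<le> Z \<omega>} =
           (\<integral>\<^sup>+\<omega>. emeasure M {\<omega>' \<in> space M. X \<omega> \<le> Z \<omega>'} \<partial>M)"
proof -
  have X: "random_variable borel X" and Z: "random_variable borel Z"
    and joint: "distr M borel X \<Otimes>\<^sub>M distr M borel Z = distr M (borel \<Otimes>\<^sub>M borel) (\<lambda>\<omega>. (X \<omega>, Z \<omega>))"
    using assms unfolding indep_var_distribution_eq by auto
  interpret Z: prob_space "distr M borel Z"
    using Z by (rule prob_space_distr)
  define S where "S = {p :: real \<times> real. fst p \<le> snd p}"
  have "{p \<in> space (borel \<Otimes>\<^sub>M borel). fst p \<le> snd p} \<in> sets (borel \<Otimes>\<^sub>M borel :: (real \<times> real) measure)"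
    by measurable
  then have S: "S \<in> sets (borel \<Otimes>\<^sub>M borel)"
    by (simp add: S_def space_pair_measure)
  have "emeasure M {\<omega> \<in> space M. X \<omega> \<le> Z \<omega>} = emeasure (distr M (borel \<Otimes>\<^sub>M borel) (\<lambda>\<omega>. (X \<omega>, Z \<omega>))) S"
    using X Z S by (subst emeasure_distr) (auto simp: S_def vimage_def Int_def conj_commute)
  also have "\<dots> = (\<integral>\<^sup>+x. emeasure (distr M borel Z) (Pair x -` S) \<partial>distr M borel X)"
    using S by (simp add: joint[symmetric] Z.emeasure_pair_measure_alt)
  also have "\<dots> = (\<integral>\<^sup>+\<omega>. emeasure (distr M borel Z) (Pair (X \<omega>) -` S) \<partial>M)"
    using X S by (intro nn_integral_distr Z.measurable_emeasure_Pair) auto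
  also have "\<dots> = (\<integral>\<^sup>+\<omega>. emeasure M {\<omega>' \<in> space M. X \<omega> \<le> Z \<omega>'} \<partial>M)"
    using Z by (subst emeasure_distr) (auto simp: S_def vimage_def Int_def conj_commute)
  finally show ?thesis .
qed

lemma (in prob_space) emeasure_le_Max_uniform:
  fixes Z :: "'i \<Rightarrow> 'a \<Rightarrow> real"
  assumes indep: "indep_vars (\<lambda>_. borel) Z (insert i J)" and J: "finite J" "J \<noteq> {}" "i \<notin> J"
    and unif: "\<And>j. j \<in> J \<Longrightarrow> distr M borel (Z j) = uniform_measure lborel {0..1}"
  shows "emeasure M {\<omega> \<in> space M. Z i \<omega> \<le> Max ((\<lambda>j. Z j \<omega>) ` J)} =
           (\<integral>\<^sup>+\<omega>. ennreal (1 - max 0 (min 1 (Z i \<omega>)) ^ card J) \<partial>M)"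
proof -
  have rv: "random_variable borel (Z j)" if "j \<in> J" for j
    using indep that unfolding indep_vars_def by auto
  have "emeasure M {\<omega>' \<in> space M. x \<le> Max ((\<lambda>j. Z j \<omega>') ` J)} =
          ennreal (1 - max 0 (min 1 x) ^ card J)" for x
  proof -
    have prob_less: "prob {\<omega> \<in> space M. Z j \<omega> < x} = max 0 (min 1 x)" if "j \<in> J" for j
      using rv[OF that] measure_distr[OF rv[OF that], of "{..<x}"]
      by (simp add: unif[OF that] measure_uniform_01_lessThan vimage_def Int_def conj_commute)
    have "prob {\<omega> \<in> space M. Max ((\<lambda>j. Z j \<omega>) ` J) < x} =
        (\<Prod>j\<in>J. prob {\<omega> \<in> space M. Z j \<omega> < x})"
      by (rule prob_Max_less[OF indep J(1,2)]) auto
    also have "\<dots> = max 0 (min 1 x) ^ card J"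
      by (simp add: prob_less)
    moreover have "{\<omega> \<in> space M. Max ((\<lambda>j. Z j \<omega>) ` J) < x} \<in> events"
      using J(1) rv by measurable
    moreover have "{\<omega>' \<in> space M. x \<le> Max ((\<lambda>j. Z j \<omega>') ` J)} =
        space M - {\<omega> \<in> space M. Max ((\<lambda>j. Z j \<omega>) ` J) < x}"
      by auto
    ultimately show ?thesis
      by (simp add: emeasure_eq_measure prob_compl)
  qed
  then show ?thesis
    using emeasure_le_indep_var[OF indep_vars_Max[OF J(1,3) indep]] by simp
qed

section \<open>Mixtures over a group label\<close>

lemma nn_integral_indicator_times_comp:
  assumes Z: "Z \<in> measurable M N" and A: "A \<in> sets M" and Q: "sets Q = sets N"
    and law: "\<And>C. C \<in> sets N \<Longrightarrow> emeasure M (A \<inter> (Z -` C \<inter> space M)) = c * emeasure Q C"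
    and g: "g \<in> borel_measurable N"
  shows "(\<integral>\<^sup>+\<omega>. indicator A \<omega> * g (Z \<omega>) \<partial>M) = c * (\<integral>\<^sup>+x. g x \<partial>Q)"
proof -
  have Z_density: "Z \<in> measurable (density M (indicator A)) N"
    using Z by (simp add: measurable_cong_sets[OF sets_density refl])
  have "(\<integral>\<^sup>+\<omega>. indicator A \<omega> * g (Z \<omega>) \<partial>M) = (\<integral>\<^sup>+\<omega>. g (Z \<omega>) \<partial>density M (indicator A))"
    using A measurable_compose[OF Z g] by (intro nn_integral_density[symmetric]) auto
  also have "\<dots> = (\<integral>\<^sup>+x. g x \<partial>distr (density M (indicator A)) N Z)"
    using Z_density g by (simp add: nn_integral_distr)
  also have "distr (density M (indicator A)) N Z = scale_measure c Q"
  proof (rule measure_eqI)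
    fix C assume "C \<in> sets (distr (density M (indicator A)) N Z)"
    then have C: "C \<in> sets N" by simp
    have "emeasure (distr (density M (indicator A)) N Z) C = emeasure M (A \<inter> (Z -` C \<inter> space M))"
      using C Z Z_density by (simp add: emeasure_distr emeasure_restricted[OF A])
    then show "emeasure (distr (density M (indicator A)) N Z) C = emeasure (scale_measure c Q) C"
      using law[OF C] by simp
  qed (use Q in simp)
  also have "(\<integral>\<^sup>+x. g x \<partial>scale_measure c Q) = c * (\<integral>\<^sup>+x. g x \<partial>Q)"
    using g by (simp add: nn_integral_scale_measure measurable_cong_sets[OF Q refl])
  finally show ?thesis .
qed

lemma (in prob_space) nn_integral_label_mixture:
  fixes L :: "'a \<Rightarrow> 'k"
  assumes L: "L \<in> measurable M (count_space UNIV)" and Z: "Z \<in> measurable M N"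
    and G: "finite G" "sum w G = 1"
    and Q: "\<And>k. k \<in> G \<Longrightarrow> prob_space (Q k)" "\<And>k. k \<in> G \<Longrightarrow> sets (Q k) = sets N"
    and law: "\<And>k C. k \<in> G \<Longrightarrow> C \<in> sets N \<Longrightarrow>
                prob {\<omega> \<in> space M. L \<omega> = k \<and> Z \<omega> \<in> C} = w k * measure (Q k) C"
    and g: "g \<in> borel_measurable N"
  shows "(\<integral>\<^sup>+\<omega>. g (Z \<omega>) \<partial>M) = (\<Sum>k\<in>G. ennreal (w k) * (\<integral>\<^sup>+x. g x \<partial>Q k))"
proof -
  define A where "A k = {\<omega> \<in> space M. L \<omega> = k}" for k
  have A_sets: "A k \<in> events" for k
    unfolding A_def using L by measurable
  have A_law: "A k \<inter> (Z -` C \<inter> space M) = {\<omega> \<in> space M. L \<omega> = k \<and> Z \<omega> \<in> C}" for k C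
    by (auto simp: A_def)
  have prob_A: "prob (A k) = w k" if "k \<in> G" for k
  proof -
    interpret Q: prob_space "Q k" using Q(1)[OF that] .
    have "A k = {\<omega> \<in> space M. L \<omega> = k \<and> Z \<omega> \<in> space N}"
      using measurable_space[OF Z] by (auto simp: A_def)
    moreover have "measure (Q k) (space N) = 1"
      using Q.prob_space sets_eq_imp_space_eq[OF Q(2)[OF that]] by simp
    ultimately show ?thesis
      using law[OF that, of "space N"] by simp
  qed
  have "prob (\<Union>k\<in>G. A k) = (\<Sum>k\<in>G. prob (A k))"
    using G A_sets by (intro finite_measure_finite_Union) (auto simp: disjoint_family_on_def A_def)
  also have "\<dots> = 1"
    using G prob_A by simp
  finally have "AE \<omega> in M. \<omega> \<in> (\<Union>k\<in>G. A k)"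
    using A_sets G by (intro AE_prob_1) auto
  then have "AE \<omega> in M. g (Z \<omega>) = (\<Sum>k\<in>G. indicator (A k) \<omega> * g (Z \<omega>))"
  proof eventually_elim
    case (elim \<omega>)
    then obtain k where "k \<in> G" "\<omega> \<in> A k" by blast
    then have "(\<Sum>j\<in>G. indicator (A j) \<omega> * g (Z \<omega>)) = (\<Sum>j\<in>G. if j = k then g (Z \<omega>) else 0)"
      by (intro sum.cong) (auto simp: A_def)
    with \<open>k \<in> G\<close> G show ?case by simp
  qed
  then have "(\<integral>\<^sup>+\<omega>. g (Z \<omega>) \<partial>M) = (\<integral>\<^sup>+\<omega>. (\<Sum>k\<in>G. indicator (A k) \<omega> * g (Z \<omega>)) \<partial>M)"
    by (rule nn_integral_cong_AE)
  also have "\<dots> = (\<Sum>k\<in>G. \<integral>\<^sup>+\<omega>. indicator (A k) \<omega> * g (Z \<omega>) \<partial>M)"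
    using A_sets measurable_compose[OF Z g] by (intro nn_integral_sum) auto
  also have "\<dots> = (\<Sum>k\<in>G. ennreal (w k) * (\<integral>\<^sup>+x. g x \<partial>Q k))"
  proof (rule sum.cong[OF refl])
    fix k assume k: "k \<in> G"
    interpret Q: prob_space "Q k" using Q(1)[OF k] .
    have "0 \<le> w k"
      using prob_A[OF k] measure_nonneg[of M "A k"] by simp
    show "(\<integral>\<^sup>+\<omega>. indicator (A k) \<omega> * g (Z \<omega>) \<partial>M) = ennreal (w k) * (\<integral>\<^sup>+x. g x \<partial>Q k)"
    proof (rule nn_integral_indicator_times_comp[OF Z A_sets Q(2)[OF k] _ g])
      fix C assume C: "C \<in> sets N"
      show "emeasure M (A k \<inter> (Z -` C \<inter> space M)) = ennreal (w k) * emeasure (Q k) C"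
        using law[OF k C] \<open>0 \<le> w k\<close>
        by (simp add: A_law emeasure_eq_measure Q.emeasure_eq_measure ennreal_mult)
    qed
  qed
  finally show ?thesis .
qed

definition block :: "(nat \<Rightarrow> nat) \<Rightarrow> nat \<Rightarrow> nat set" where
  "block nn k = {(\<Sum>j\<in>{1..<k}. nn j) + 1 .. (\<Sum>j\<in>{1..k}. nn j)}"

lemma card_block: "1 \<le> k \<Longrightarrow> card (block nn k) = nn k"
  by (simp add: block_def atLeastLessThanSuc_atLeastAtMost[symmetric] sum.atLeastLessThan_Suc)

lemma block_one: "block nn 1 = {1..nn 1}"
  by (simp add: block_def)

lemma UN_block: "(\<Union>k\<in>{1..K}. block nn k) = {1..\<Sum>j\<in>{1..K}. nn j}"
proof (induction K)
  case (Suc K)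
  have "{1..Suc K} = insert (Suc K) {1..K}" by auto
  then show ?case
    using Suc by (auto simp: block_def atLeastLessThanSuc_atLeastAtMost)
qed simp

lemma group_eq_block:
  assumes labels: "\<And>k i. k \<in> {1..K} \<Longrightarrow> i \<in> block nn k \<Longrightarrow> x0 i = k" and k: "k \<in> {1..K}"
  shows "{i \<in> {1..\<Sum>j\<in>{1..K}. nn j}. x0 i = k} = block nn k"
  using labels k unfolding UN_block[symmetric] by blast

section \<open>The two-sided uniform example\<close>

locale gwcp_example = prob_space M
  for M :: "'w measure" and SX :: "'x measure" and Pk :: "nat \<Rightarrow> ('x \<times> real) measure"
    and X0 :: "nat \<Rightarrow> 'w \<Rightarrow> nat" and X1 :: "nat \<Rightarrow> 'w \<Rightarrow> 'x" and Y :: "nat \<Rightarrow> 'w \<Rightarrow> real"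
    and K m :: nat and \<alpha> :: real and nn :: "nat \<Rightarrow> nat" and n :: nat +
  assumes K: "1 \<le> K"
    and alpha: "0 < \<alpha>" "\<alpha> < 1"
    and m: "real m = (1 - \<alpha>) * real K" "1 \<le> m"
    and nn_pos: "\<And>k. k \<in> {1..K} \<Longrightarrow> 1 \<le> nn k"
    and n_def: "n = (\<Sum>k\<in>{1..K}. nn k)"
    and Pk_prob: "\<And>k. k \<in> {1..K} \<Longrightarrow> prob_space (Pk k)"
    and Pk_sets: "\<And>k. k \<in> {1..K} \<Longrightarrow> sets (Pk k) = sets (SX \<Otimes>\<^sub>M borel)"
    and marg1: "distr (Pk 1) borel snd = uniform_measure lborel {0..1}"
    and marg2: "\<And>k. k \<in> {2..m} \<Longrightarrow> distr (Pk k) borel snd = uniform_measure lborel {-1..0}"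
    and marg3: "\<And>k. k \<in> {m+1..K} \<Longrightarrow> distr (Pk k) borel snd = uniform_measure lborel {1..2}"
    and indep: "indep_vars (\<lambda>_. count_space UNIV \<Otimes>\<^sub>M SX \<Otimes>\<^sub>M borel)
                  (\<lambda>i \<omega>. (X0 i \<omega>, X1 i \<omega>, Y i \<omega>)) {1..n+1}"
    and calib_label: "\<And>k i \<omega>. k \<in> {1..K} \<Longrightarrow> i \<in> block nn k \<Longrightarrow> \<omega> \<in> space M \<Longrightarrow> X0 i \<omega> = k"
    and calib_law: "\<And>k i. k \<in> {1..K} \<Longrightarrow> i \<in> block nn k \<Longrightarrow>
                      distr M (SX \<Otimes>\<^sub>M borel) (\<lambda>\<omega>. (X1 i \<omega>, Y i \<omega>)) = Pk k"
    and test_law: "\<And>k A. k \<in> {1..K} \<Longrightarrow> A \<in> sets (SX \<Otimes>\<^sub>M borel) \<Longrightarrow>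
                      prob {\<omega> \<in> space M. X0 (n+1) \<omega> = k \<and> (X1 (n+1) \<omega>, Y (n+1) \<omega>) \<in> A} =
                      1 / real K * measure (Pk k) A"
begin

definition calib_max :: "'w \<Rightarrow> real" where
  "calib_max \<omega> = Max ((\<lambda>i. Y i \<omega>) ` {1..nn 1})"

definition calib_max_survival :: "real \<Rightarrow> ennreal" where
  "calib_max_survival y = ennreal (1 - max 0 (min 1 y) ^ nn 1)"

lemma borel_measurable_calib_max_survival[measurable]: "calib_max_survival \<in> borel_measurable borel"
  unfolding calib_max_survival_def by measurable

lemma m_le_K: "m \<le> K"
proof -
  have "(1 - \<alpha>) * real K \<le> real K"
    using alpha by (intro mult_left_le_one_le) auto
  with m(1) show ?thesis
    by simp
qed

lemma random_variables:
  assumes "i \<in> {1..n+1}"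
  shows "random_variable (count_space UNIV) (X0 i)"
    and "random_variable (SX \<Otimes>\<^sub>M borel) (\<lambda>\<omega>. (X1 i \<omega>, Y i \<omega>))"
    and "random_variable borel (Y i)"
proof -
  have triple: "random_variable (count_space UNIV \<Otimes>\<^sub>M SX \<Otimes>\<^sub>M borel) (\<lambda>\<omega>. (X0 i \<omega>, X1 i \<omega>, Y i \<omega>))"
    using indep assms unfolding indep_vars_def by auto
  show "random_variable (count_space UNIV) (X0 i)"
    using measurable_compose[OF triple measurable_fst] by (simp add: comp_def)
  show "random_variable (SX \<Otimes>\<^sub>M borel) (\<lambda>\<omega>. (X1 i \<omega>, Y i \<omega>))"
    using measurable_compose[OF triple measurable_snd] by (simp add: comp_def)
  then show "random_variable borel (Y i)"
    using measurable_compose[OF _ measurable_snd] by (simp add: comp_def)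
qed

lemma indep_scores: "indep_vars (\<lambda>_. borel) Y {1..n+1}"
  using indep_vars_compose2[OF indep, of "\<lambda>_ p. snd (snd p)" "\<lambda>_. borel"] by simp

lemma block_subset: "k \<in> {1..K} \<Longrightarrow> block nn k \<subseteq> {1..n}"
  using UN_block[where K = K and nn = nn] by (auto simp: n_def)

lemma calib_group_eq_block:
  "\<omega> \<in> space M \<Longrightarrow> k \<in> {1..K} \<Longrightarrow> {i \<in> {1..n}. X0 i \<omega> = k} = block nn k"
  unfolding n_def using calib_label by (intro group_eq_block) auto

lemma distr_calib_score:
  assumes "k \<in> {1..K}" "i \<in> block nn k"
  shows "distr M borel (Y i) = distr (Pk k) borel snd"
proof -
  have "i \<in> {1..n+1}"
    using block_subset[OF assms(1)] assms(2) by auto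
  then have "distr M borel (Y i) = distr (distr M (SX \<Otimes>\<^sub>M borel) (\<lambda>\<omega>. (X1 i \<omega>, Y i \<omega>))) borel snd"
    using random_variables(2) by (subst distr_distr) (auto simp: comp_def)
  then show ?thesis
    using calib_law[OF assms] by simp
qed

definition scores_separated :: "'w \<Rightarrow> bool" where
  "scores_separated \<omega> \<longleftrightarrow> (\<forall>i\<in>{1..n}. (X0 i \<omega> = 1 \<longrightarrow> Y i \<omega> \<in> {0..1}) \<and>
     (X0 i \<omega> \<in> {2..m} \<longrightarrow> Y i \<omega> \<le> 0) \<and> (X0 i \<omega> \<in> {m+1..K} \<longrightarrow> 1 \<le> Y i \<omega>))"

lemma AE_scores_separated: "AE \<omega> in M. scores_separated \<omega>"
proof -
  define support where
    "support k = (if k = 1 then {0..1} else if k \<le> m then {-1..0} else {1..2::real})" for k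
  have "AE \<omega> in M. \<forall>k\<in>{1..K}. \<forall>i\<in>block nn k. Y i \<omega> \<in> support k"
  proof (intro eventually_ball_finite ballI)
    fix k i assume k: "k \<in> {1..K}" and i: "i \<in> block nn k"
    have "distr M borel (Y i) = uniform_measure lborel (support k)"
      using distr_calib_score[OF k i] marg1 marg2 marg3 k by (auto simp: support_def)
    then show "AE \<omega> in M. Y i \<omega> \<in> support k"
      using block_subset[OF k] i
      by (intro AE_mem_of_distr_uniform random_variables(3)) (auto simp: support_def)
  qed (auto simp: block_def)
  then show ?thesis
    using AE_space
  proof eventually_elim
    case (elim \<omega>)
    have score: "Y i \<omega> \<in> support (X0 i \<omega>)" if "i \<in> {1..n}" "X0 i \<omega> \<in> {1..K}" for i
    proof -
      have "i \<in> block nn (X0 i \<omega>)"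
        using calib_group_eq_block[OF elim(2) that(2)] that by auto
      with elim(1) that(2) show ?thesis by blast
    qed
    show ?case
      unfolding scores_separated_def
    proof (intro ballI conjI impI)
      fix i assume i: "i \<in> {1..n}"
      show "Y i \<omega> \<in> {0..1}" if "X0 i \<omega> = 1"
        using score[OF i] that K by (simp add: support_def)
      show "Y i \<omega> \<le> 0" if "X0 i \<omega> \<in> {2..m}"
        using score[OF i] that m_le_K by (simp add: support_def)
      show "1 \<le> Y i \<omega>" if "X0 i \<omega> \<in> {m+1..K}"
        using score[OF i] that m(2) by (simp add: support_def)
    qed
  qed
qed

lemma gwcp_qhat_eq_calib_max:
  assumes "\<omega> \<in> space M" and "scores_separated \<omega>"
  shows "gwcp_qhat \<alpha> K (\<lambda>_. 1 / real K) n (\<lambda>x y. y) (\<lambda>i. (X0 i \<omega>, X1 i \<omega>)) (\<lambda>i. Y i \<omega>) =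
           ereal (calib_max \<omega>)"
proof -
  have "group_size n (\<lambda>i. X0 i \<omega>) k \<noteq> 0" if "k \<in> {1..m}" for k
  proof -
    have k: "k \<in> {1..K}" using that m_le_K by auto
    with calib_group_eq_block[OF assms(1) k] card_block[of k nn] nn_pos[OF k] show ?thesis
      by (simp add: group_size_def)
  qed
  with assms(2) [unfolded scores_separated_def] have "gwcp_qhat \<alpha> K (\<lambda>_. 1 / real K) n (\<lambda>x y. y) (\<lambda>i. (X0 i \<omega>, X1 i \<omega>)) (\<lambda>i. Y i \<omega>) =
      ereal (Max ((\<lambda>i. Y i \<omega>) ` {i \<in> {1..n}. X0 i \<omega> = 1}))"
    using gwcp_qhat_eq_Max[OF m(2) m_le_K m(1),
        where X = "\<lambda>i. (X0 i \<omega>, X1 i \<omega>)" and Yd = "\<lambda>i. Y i \<omega>"]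
    by simp
  then show ?thesis
    using calib_group_eq_block[OF assms(1), of 1] K by (simp add: calib_max_def block_def)
qed

definition coverage_event :: "'w set" where
  "coverage_event = {\<omega> \<in> space M.
      Y (n+1) \<omega> \<in> gwcp_set \<alpha> K (\<lambda>_. 1 / real K) n (\<lambda>x y. y)
                     (\<lambda>i. (X0 i \<omega>, X1 i \<omega>)) (\<lambda>i. Y i \<omega>) (X0 (n+1) \<omega>, X1 (n+1) \<omega>)}"

lemma measure_coverage_eq_prob_le_calib_max:
  "measure M coverage_event = measure M {\<omega> \<in> space M. Y (n+1) \<omega> \<le> calib_max \<omega>}"
proof (rule measure_eq_AE)
  show "AE \<omega> in M. \<omega> \<in> coverage_event \<longleftrightarrow> \<omega> \<in> {\<omega> \<in> space M. Y (n+1) \<omega> \<le> calib_max \<omega>}"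
    using AE_scores_separated AE_space
    by eventually_elim (simp add: coverage_event_def gwcp_set_def gwcp_qhat_eq_calib_max)
  have "coverage_event = {\<omega> \<in> space M. ereal (Y (n+1) \<omega>) \<le>
        Quantile (1 - \<alpha>) (mixture_score_cdf K (\<lambda>_. 1 / real K) n (\<lambda>i. X0 i \<omega>) (\<lambda>i. Y i \<omega>))}"
    by (simp add: coverage_event_def gwcp_set_def gwcp_qhat_def)
  also have "\<dots> \<in> sets M"
    using random_variables
    by (intro measurable_le_Quantile mixture_score_cdf_mono measurable_mixture_score_cdf) auto
  finally show "coverage_event \<in> sets M" .
  have "{1..nn 1} \<subseteq> {1..n}"
    using block_subset[of 1] K unfolding block_one by simp
  then have [measurable]: "Y (n+1) \<in> borel_measurable M" "calib_max \<in> borel_measurable M"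
    unfolding calib_max_def using random_variables(3) by auto
  show "{\<omega> \<in> space M. Y (n+1) \<omega> \<le> calib_max \<omega>} \<in> sets M"
    by measurable
qed

lemma emeasure_le_calib_max:
  "emeasure M {\<omega> \<in> space M. Y (n+1) \<omega> \<le> calib_max \<omega>} =
     (\<integral>\<^sup>+\<omega>. calib_max_survival (Y (n+1) \<omega>) \<partial>M)"
proof -
  have calib1: "{1..nn 1} \<subseteq> {1..n}"
    using block_subset[of 1] K unfolding block_one by simp
  have "indep_vars (\<lambda>_. borel) Y (insert (n+1) {1..nn 1})"
    using calib1 by (intro indep_vars_subset[OF indep_scores]) auto
  moreover have "distr M borel (Y j) = uniform_measure lborel {0..1}" if "j \<in> {1..nn 1}" for j
    using distr_calib_score[of 1 j] marg1 K that unfolding block_one by simp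
  ultimately show ?thesis
    unfolding calib_max_def calib_max_survival_def using calib1 nn_pos[of 1] K
    by (subst emeasure_le_Max_uniform) auto
qed

lemma nn_integral_group_survival:
  assumes k: "k \<in> {1..K}"
  shows "(\<integral>\<^sup>+p. calib_max_survival (snd p) \<partial>Pk k) =
           ennreal (of_bool (k \<le> m) - of_bool (k = 1) / (real (nn 1) + 1))"
proof -
  have "snd \<in> measurable (Pk k) borel"
    unfolding measurable_cong_sets[OF Pk_sets[OF k] refl] by measurable
  then have "(\<integral>\<^sup>+p. calib_max_survival (snd p) \<partial>Pk k) =
      (\<integral>\<^sup>+y. calib_max_survival y \<partial>distr (Pk k) borel snd)"
    by (intro nn_integral_distr[symmetric]) auto
  also have "\<dots> = ennreal (of_bool (k \<le> m) - of_bool (k = 1) / (real (nn 1) + 1))"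
  proof -
    consider (first) "k = 1" | (low) "k \<in> {2..m}" | (high) "k \<in> {m+1..K}"
      using k by fastforce
    then show ?thesis
    proof cases
      case first
      have "(\<integral>\<^sup>+y. calib_max_survival y \<partial>uniform_measure lborel {0..1}) =
          ennreal (1 - 1 / (real (nn 1) + 1))"
        by (rule nn_integral_uniform_01_one_minus_power) (simp add: calib_max_survival_def)
      then show ?thesis
        using m(2) unfolding first marg1 by simp
    next
      case low
      then show ?thesis
        unfolding marg2[OF low] using nn_pos[of 1] K
        by (intro nn_integral_uniform_Icc_const) (auto simp: calib_max_survival_def)
    next
      case high
      then show ?thesis
        unfolding marg3[OF high] using m(2)
        by (intro nn_integral_uniform_Icc_const) (auto simp: calib_max_survival_def)
    qed
  qed
  finally show ?thesis .
qed

lemma nn_integral_test_survival: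
  "(\<integral>\<^sup>+\<omega>. calib_max_survival (Y (n+1) \<omega>) \<partial>M) = ennreal (1 - \<alpha> - 1 / (real K * (real (nn 1) + 1)))"
proof -
  define v where "v k = of_bool (k \<le> m) - of_bool (k = 1) / (real (nn 1) + 1)" for k
  have v_nonneg: "0 \<le> v k" for k
    using m(2) by (simp add: v_def)
  have "(\<integral>\<^sup>+\<omega>. calib_max_survival (Y (n+1) \<omega>) \<partial>M) =
      (\<integral>\<^sup>+\<omega>. calib_max_survival (snd (X1 (n+1) \<omega>, Y (n+1) \<omega>)) \<partial>M)"
    by simp
  also have "\<dots> = (\<Sum>k\<in>{1..K}. ennreal (1 / real K) * (\<integral>\<^sup>+p. calib_max_survival (snd p) \<partial>Pk k))"
    by (rule nn_integral_label_mixture[OF random_variables(1,2)[of "n+1"]])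
       (use K Pk_prob Pk_sets test_law in auto)
  also have "\<dots> = (\<Sum>k\<in>{1..K}. ennreal (1 / real K * v k))"
  proof (rule sum.cong[OF refl])
    fix k assume k: "k \<in> {1..K}"
    show "ennreal (1 / real K) * (\<integral>\<^sup>+p. calib_max_survival (snd p) \<partial>Pk k) =
        ennreal (1 / real K * v k)"
      unfolding nn_integral_group_survival[OF k] v_def[symmetric]
      by (rule ennreal_mult'[symmetric]) simp
  qed
  also have "\<dots> = ennreal (\<Sum>k\<in>{1..K}. 1 / real K * v k)"
    using v_nonneg by (intro sum_ennreal) simp
  also have "(\<Sum>k\<in>{1..K}. 1 / real K * v k) = 1 - \<alpha> - 1 / (real K * (real (nn 1) + 1))"
  proof -
    have "{1..K} \<inter> {k. k \<le> m} = {1..m}"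
      using m_le_K by auto
    then have "(\<Sum>k\<in>{1..K}. v k) = real m - 1 / (real (nn 1) + 1)"
      using K by (simp add: v_def sum_subtractf sum_divide_distrib[symmetric])
    moreover have "1 - \<alpha> = real m / real K"
      using m(1) K by (simp add: field_simps)
    then have "1 / real K * (real m - 1 / (real (nn 1) + 1)) = 1 - \<alpha> - 1 / (real K * (real (nn 1) + 1))"
      by (simp add: right_diff_distrib)
    ultimately show ?thesis
      by (simp only: sum_distrib_left[symmetric])
  qed
  finally show ?thesis .
qed

lemma measure_coverage_event:
  "measure M coverage_event = 1 - \<alpha> - 1 / (real K * (real (nn 1) + 1))"
proof -
  have "1 / (real K * (real (nn 1) + 1)) \<le> 1 / real K"
    using K by (intro divide_left_mono) auto
  also have "\<dots> \<le> real m / real K"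
    using m(2) by (intro divide_right_mono) auto
  finally have "1 / (real K * (real (nn 1) + 1)) \<le> real m / real K" .
  moreover have "1 - \<alpha> = real m / real K"
    using m(1) K by (simp add: field_simps)
  ultimately have nonneg: "0 \<le> 1 - \<alpha> - 1 / (real K * (real (nn 1) + 1))"
    by simp
  have "measure M coverage_event = enn2real (emeasure M {\<omega> \<in> space M. Y (n+1) \<omega> \<le> calib_max \<omega>})"
    unfolding measure_coverage_eq_prob_le_calib_max by (simp add: measure_def)
  also have "\<dots> = enn2real (ennreal (1 - \<alpha> - 1 / (real K * (real (nn 1) + 1))))"
    by (simp only: emeasure_le_calib_max nn_integral_test_survival)
  finally show ?thesis
    using nonneg by simp
qed

end

theorem proposition2:
  fixes M :: "'w measure"
    and SX :: "'x measure"
    and Pk :: "nat \<Rightarrow> ('x \<times> real) measure"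
    and X0 :: "nat \<Rightarrow> 'w \<Rightarrow> nat" and X1 :: "nat \<Rightarrow> 'w \<Rightarrow> 'x" and Y :: "nat \<Rightarrow> 'w \<Rightarrow> real"
    and K m :: nat and \<alpha> :: real and nn :: "nat \<Rightarrow> nat" and n :: nat
  assumes K: "K \<ge> 1"
    and alpha: "0 < \<alpha>" "\<alpha> < 1"
    and m: "real m = (1 - \<alpha>) * real K" "m \<ge> 1"
    and nn_pos: "\<forall>k\<in>{1..K}. nn k \<ge> 1"
    and nn_min: "nn 1 = Min (nn ` {1..K})"
    and n_def: "n = (\<Sum>k\<in>{1..K}. nn k)"
    and Pi_prob: "\<forall>k\<in>{1..K}. prob_space (Pk k) \<and> sets (Pk k) = sets (SX \<Otimes>\<^sub>M borel)"
    and marg1: "distr (Pk 1) borel snd = uniform_measure lborel {0..1}"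
    and marg2: "\<forall>k\<in>{2..m}. distr (Pk k) borel snd = uniform_measure lborel {-1..0}"
    and marg3: "\<forall>k\<in>{m+1..K}. distr (Pk k) borel snd = uniform_measure lborel {1..2}"
    and M: "prob_space M"
    and indep: "prob_space.indep_vars M (\<lambda>_. count_space UNIV \<Otimes>\<^sub>M SX \<Otimes>\<^sub>M borel)
                  (\<lambda>i \<omega>. (X0 i \<omega>, X1 i \<omega>, Y i \<omega>)) {1..n+1}"
    and calib: "\<forall>k\<in>{1..K}. \<forall>i\<in>{(\<Sum>j\<in>{1..<k}. nn j) + 1 .. (\<Sum>j\<in>{1..k}. nn j)}.
                  (\<forall>\<omega>\<in>space M. X0 i \<omega> = k) \<and>
                  distr M (SX \<Otimes>\<^sub>M borel) (\<lambda>\<omega>. (X1 i \<omega>, Y i \<omega>)) = Pk k"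
    and test_group: "\<forall>k\<in>{1..K}. measure M {\<omega>\<in>space M. X0 (n+1) \<omega> = k} = 1 / real K"
    and test_cond: "\<forall>k\<in>{1..K}. \<forall>A\<in>sets (SX \<Otimes>\<^sub>M borel).
                  measure M {\<omega>\<in>space M. X0 (n+1) \<omega> = k \<and> (X1 (n+1) \<omega>, Y (n+1) \<omega>) \<in> A}
                  = (1 / real K) * measure (Pk k) A"
  shows "measure M {\<omega>\<in>space M.
            Y (n+1) \<omega> \<in> gwcp_set \<alpha> K (\<lambda>_. 1 / real K) n (\<lambda>x y. y)
                           (\<lambda>i. (X0 i \<omega>, X1 i \<omega>)) (\<lambda>i. Y i \<omega>) (X0 (n+1) \<omega>, X1 (n+1) \<omega>)}
         = 1 - \<alpha> - 1 / (real K * (real (Min (nn ` {1..K})) + 1))"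
proof -
  interpret gwcp_example M SX Pk X0 X1 Y K m \<alpha> nn n
    using K alpha m nn_pos n_def Pi_prob marg1 marg2 marg3 M indep calib test_cond
    by (intro gwcp_example.intro gwcp_example_axioms.intro) (simp_all add: block_def)
  show ?thesis
    using measure_coverage_event nn_min by (simp add: coverage_event_def)
qed

end
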